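(* Let $K$ be a number field. Let $\mathcal C_K$ be the set of compositum feasible triplets over $K$ and let $\mathcal C'_K$ be the set of triplets of positive integers $(a,b,c)$ with $c=\mathrm{lcm}(a,b)\cdot t$ for some positive integer $t\mid\gcd(a,b)$. (1) If $(a,b,c),(a',b',c')\in\mathcal C_K$ and $(a,b,c)\in\mathcal C'_K$, then $(aa',bb',cc')\in\mathcal C_K$. (2) $\mathcal C'_K\subseteq\mathcal C_K$, and $\mathcal C'_K$ is a commutative monoid under componentwise multiplication (with identity $(1,1,1)$). In particular, if $(a,b,c)\in\mathcal C'_K$ then $(a^n,b^n,c^n)\in\mathcal C'_K$ for every $n\in\mathbb N$.
   Context: Extensions are finite and inside a fixed algebraic closure $\bar K$. A triplet $(a,b,c)$ of positive integers is compositum feasible over $K$ if there exist extensions $L/K$, $L'/K$ of degrees $a$ and $b$ whose compositum $LL'$ has degree $c$ over $K$. *)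

theory Defs
  imports "HOL-Algebra.Embedded_Algebras" "HOL-Algebra.Generated_Fields" Complex_Main
begin

text \<open>Since every
finite extension of a number field inside the complex numbers consists of algebraic
numbers, subfields of the complex numbers of finite degree over K are exactly the
finite extensions of K inside the fixed algebraic closure (algebraic numbers).\<close>

definition CC :: "complex ring" where
  "CC = \<lparr>carrier = UNIV, monoid.mult = (*), one = 1, zero = 0, add = (+)\<rparr>"

definition number_field :: "complex set \<Rightarrow> bool" where
  "number_field K \<longleftrightarrow> subfield K CC \<and> (\<exists>n. ring.dimension CC n \<rat> K)"

definition ext_of_degree :: "complex set \<Rightarrow> complex set \<Rightarrow> nat \<Rightarrow> bool" where
  "ext_of_degree K L n \<longleftrightarrow> subfield L CC \<and> K \<subseteq> L \<and> ring.dimension CC n K L"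

definition compositum :: "complex set \<Rightarrow> complex set \<Rightarrow> complex set" where
  "compositum L L' = generate_field CC (L \<union> L')"

definition compositum_feasible :: "complex set \<Rightarrow> nat \<Rightarrow> nat \<Rightarrow> nat \<Rightarrow> bool" where
  "compositum_feasible K a b c \<longleftrightarrow> 0 < a \<and> 0 < b \<and> 0 < c \<and>
     (\<exists>L L'. ext_of_degree K L a \<and> ext_of_degree K L' b \<and> ext_of_degree K (compositum L L') c)"

definition feasible_set :: "complex set \<Rightarrow> (nat \<times> nat \<times> nat) set" where
  "feasible_set K = {(a, b, c). compositum_feasible K a b c}"

definition lcm_set :: "(nat \<times> nat \<times> nat) set" where
  "lcm_set = {(a, b, c). 0 < a \<and> 0 < b \<and> (\<exists>t. 0 < t \<and> t dvd gcd a b \<and> c = lcm a b * t)}"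

definition tmult :: "nat \<times> nat \<times> nat \<Rightarrow> nat \<times> nat \<times> nat \<Rightarrow> nat \<times> nat \<times> nat" where
  "tmult x y = (case x of (a, b, c) \<Rightarrow> case y of (a', b', c') \<Rightarrow> (a * a', b * b', c * c'))"

end

(* The triples of lcm_set are exactly (s u, s v, s u v) with s, u, v > 0. Given fields L, L'
   realizing (a', b', c') with compositum M, adjoin to both L and L' a radical of degree s over M,
   then to the first field alone a radical of degree u over the new compositum, then to the second
   alone one of degree v. A radical x with x^n rational has degree n over every field between K and
   the current compositum, since its minimal polynomial divides X^n - x^n; so the three degrees get
   multiplied by s u, s v and s u v. Radicals of every degree exist because for a suitable prime p
   the polynomial X^n - p is irreducible over any given number field. Part (2) is the case
   (a', b', c') = (1, 1, 1) together with the arithmetic of lcm_set. *)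

theory Submission
  imports Defs "HOL-Algebra.Finite_Extensions" "HOL-Computational_Algebra.Fundamental_Theorem_Algebra"
    "HOL-Computational_Algebra.Polynomial_Factorial" "HOL-Computational_Algebra.Field_as_Ring"
    "HOL-Computational_Algebra.Primes"
begin

lemma CC_simps [simp]:
  "carrier CC = UNIV" "monoid.mult CC = (*)" "one CC = 1" "zero CC = 0" "add CC = (+)"
  by (simp_all add: CC_def)

lemma field_CC: "field CC"
proof -
  have "cring CC"
    by (rule cringI) (auto intro!: abelian_groupI comm_monoidI simp: ring_distribs, metis add.left_inverse)
  then interpret cring CC .
  show ?thesis
    by (rule cring_fieldI) (auto simp: Units_def, metis left_inverse right_inverse)
qed

interpretation C: domain CC
  by (rule field.axioms(1)[OF field_CC])

lemma CC_pow [simp]: "x [^]\<^bsub>CC\<^esub> (n::nat) = x ^ n"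
  by (induct n) auto

lemma CC_a_inv [simp]: "\<ominus>\<^bsub>CC\<^esub> x = - x"
  by (rule C.minus_equality) auto

lemma CC_inv [simp]: "x \<noteq> 0 \<Longrightarrow> inv\<^bsub>CC\<^esub> x = inverse x"
  by (rule C.comm_inv_char) auto

context
  fixes F assumes F: "subfield F CC"
begin

lemma subfield_CC_zero: "0 \<in> F"
  using subringE(2)[OF subfieldE(1)[OF F]] by simp

lemma subfield_CC_one: "1 \<in> F"
  using subringE(3)[OF subfieldE(1)[OF F]] by simp

lemma subfield_CC_uminus: "x \<in> F \<Longrightarrow> - x \<in> F"
  using subringE(5)[OF subfieldE(1)[OF F]] by simp

lemma subfield_CC_mult: "x \<in> F \<Longrightarrow> y \<in> F \<Longrightarrow> x * y \<in> F"
  using subringE(6)[OF subfieldE(1)[OF F]] by simp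

lemma subfield_CC_add: "x \<in> F \<Longrightarrow> y \<in> F \<Longrightarrow> x + y \<in> F"
  using subringE(7)[OF subfieldE(1)[OF F]] by simp

lemma subfield_CC_inverse: "x \<in> F \<Longrightarrow> inverse x \<in> F"
  using C.subfield_m_inv(1)[OF F, of x] subfield_CC_zero by (cases "x = 0") auto

lemma subfield_CC_diff: "x \<in> F \<Longrightarrow> y \<in> F \<Longrightarrow> x - y \<in> F"
  using subfield_CC_add subfield_CC_uminus by (metis diff_conv_add_uminus)

lemma subfield_CC_divide: "x \<in> F \<Longrightarrow> y \<in> F \<Longrightarrow> x / y \<in> F"
  using subfield_CC_mult subfield_CC_inverse by (metis divide_inverse)

lemma subfield_CC_power: "x \<in> F \<Longrightarrow> x ^ n \<in> F"
  by (induct n) (auto intro: subfield_CC_one subfield_CC_mult)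

lemma subfield_CC_of_nat: "of_nat n \<in> F"
  by (induct n) (auto intro: subfield_CC_zero subfield_CC_one subfield_CC_add)

lemma subfield_CC_of_int: "of_int n \<in> F"
  by (cases n rule: int_cases) (auto intro: subfield_CC_of_nat subfield_CC_uminus simp del: of_nat_Suc)

lemma Rats_subset_subfield_CC: "\<rat> \<subseteq> F"
  by (auto elim!: Rats_cases' intro!: subfield_CC_divide subfield_CC_of_int)

end

lemmas subfield_CC_closed = subfield_CC_zero subfield_CC_one subfield_CC_uminus subfield_CC_mult
  subfield_CC_add subfield_CC_inverse subfield_CC_diff subfield_CC_divide subfield_CC_power
  subfield_CC_of_nat subfield_CC_of_int

lemma subfield_Rats: "subfield \<rat> CC"
  by (rule field.subfieldI'[OF field_CC], rule C.subringI) auto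

text \<open>HOL-Algebra represents polynomials as lists of coefficients, leading coefficient first.\<close>

definition poly_of_list :: "complex list \<Rightarrow> complex poly" where
  "poly_of_list l = Poly (rev l)"

definition list_of_poly :: "complex poly \<Rightarrow> complex list" where
  "list_of_poly P = rev (coeffs P)"

lemma eval_eq_poly_of_list: "C.eval l x = poly (poly_of_list l) x"
proof (induct l)
  case Nil thus ?case by (simp add: poly_of_list_def)
next
  case (Cons a l)
  have "C.eval (a # l) x = a * x ^ length l + C.eval l x"
    by simp
  thus ?case using Cons by (simp add: poly_of_list_def Poly_snoc poly_monom)
qed

lemma poly_of_list_of_poly [simp]: "poly_of_list (list_of_poly P) = P"
  by (simp add: poly_of_list_def list_of_poly_def)

lemma eval_list_of_poly: "C.eval (list_of_poly P) x = poly P x"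
  using eval_eq_poly_of_list[of "list_of_poly P"] by simp

lemma list_of_poly_carrier:
  assumes "\<And>i. coeff P i \<in> K"
  shows "list_of_poly P \<in> carrier (K[X]\<^bsub>CC\<^esub>)"
proof -
  have "set (coeffs P) \<subseteq> K"
    using assms by (auto simp: coeffs_def)
  moreover have "P \<noteq> 0 \<Longrightarrow> hd (rev (coeffs P)) \<noteq> 0"
    by (simp add: hd_rev last_coeffs_eq_coeff_degree)
  ultimately show ?thesis
    unfolding univ_poly_carrier[symmetric] polynomial_def list_of_poly_def by auto
qed

lemma univ_poly_carrierD:
  assumes "l \<in> carrier (K[X]\<^bsub>CC\<^esub>)"
  shows "set l \<subseteq> K" "l \<noteq> [] \<Longrightarrow> hd l \<noteq> 0"
  using assms unfolding univ_poly_carrier[symmetric] polynomial_def by auto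

lemma list_of_poly_of_list:
  assumes "l \<in> carrier (K[X]\<^bsub>CC\<^esub>)"
  shows "list_of_poly (poly_of_list l) = l"
proof (cases l)
  case (Cons a l')
  then have "a \<noteq> 0" using univ_poly_carrierD(2)[OF assms] by auto
  then have "strip_while ((=) 0) (rev l) = rev l"
    using Cons by (simp add: strip_while_def)
  thus ?thesis by (simp add: poly_of_list_def list_of_poly_def)
qed (simp add: poly_of_list_def list_of_poly_def)

lemma coeff_poly_of_list_mem:
  assumes "l \<in> carrier (K[X]\<^bsub>CC\<^esub>)" "0 \<in> K"
  shows "coeff (poly_of_list l) i \<in> K"
  using univ_poly_carrierD(1)[OF assms(1)] assms(2)
  by (auto simp: poly_of_list_def nth_default_def rev_nth)

lemma degree_poly_of_list:
  assumes "l \<in> carrier (K[X]\<^bsub>CC\<^esub>)"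
  shows "degree (poly_of_list l) = Polynomials.degree l"
proof (cases "poly_of_list l = 0")
  case True
  then show ?thesis
    using list_of_poly_of_list[OF assms] by (simp add: list_of_poly_def)
next
  case False
  then show ?thesis
    using list_of_poly_of_list[OF assms] by (metis list_of_poly_def length_coeffs_degree length_rev diff_Suc_1)
qed

lemma lead_coeff_poly_of_list:
  assumes "l \<in> carrier (K[X]\<^bsub>CC\<^esub>)" "l \<noteq> []"
  shows "lead_coeff (poly_of_list l) = hd l"
  using assms degree_poly_of_list[OF assms(1)]
  by (simp add: poly_of_list_def nth_default_def rev_nth hd_conv_nth)

lemma poly_of_list_mult:
  assumes "set p \<subseteq> carrier CC" "set q \<subseteq> carrier CC"
  shows "poly_of_list (C.poly_mult p q) = poly_of_list p * poly_of_list q"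
proof -
  have "poly (poly_of_list (C.poly_mult p q)) = poly (poly_of_list p * poly_of_list q)"
    using C.eval_poly_mult[of p q] assms by (auto simp: eval_eq_poly_of_list)
  thus ?thesis by (simp add: poly_eq_poly_eq_iff)
qed

lemma pdivides_imp_dvd:
  assumes "p pdivides\<^bsub>CC\<^esub> q"
  shows "poly_of_list p dvd poly_of_list q"
proof -
  obtain r where "r \<in> carrier (poly_ring CC)" "q = p \<otimes>\<^bsub>poly_ring CC\<^esub> r"
    using assms unfolding pdivides_def factor_def by auto
  hence "poly_of_list q = poly_of_list p * poly_of_list r"
    by (simp add: univ_poly_def poly_of_list_mult)
  thus ?thesis by simp
qed

abbreviation algebraic_over :: "complex set \<Rightarrow> complex \<Rightarrow> bool" where
  "algebraic_over F x \<equiv> (C.algebraic over F) x"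

abbreviation adjoin :: "complex set \<Rightarrow> complex \<Rightarrow> complex set" where
  "adjoin F x \<equiv> C.simple_extension F x"

definition poly_over :: "complex set \<Rightarrow> complex poly \<Rightarrow> bool" where
  "poly_over F P \<longleftrightarrow> (\<forall>i. coeff P i \<in> F)"

definition min_poly :: "complex set \<Rightarrow> complex \<Rightarrow> complex poly" where
  "min_poly F x = poly_of_list (C.Irr F x)"

lemma algebraic_overI:
  assumes "poly_over F P" "P \<noteq> 0" "poly P x = 0"
  shows "algebraic_over F x"
proof (rule C.algebraicI)
  show "list_of_poly P \<in> carrier (F[X]\<^bsub>CC\<^esub>)"
    using assms(1) by (simp add: poly_over_def list_of_poly_carrier)
  show "list_of_poly P \<noteq> []"
    using assms(2) by (simp add: list_of_poly_def)
  show "C.eval (list_of_poly P) x = \<zero>\<^bsub>CC\<^esub>"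
    using assms(3) by (simp add: eval_list_of_poly)
qed

context
  fixes F x
  assumes F: "subfield F CC" and alg: "algebraic_over F x"
begin

lemma Irr_carrier: "C.Irr F x \<in> carrier (F[X]\<^bsub>CC\<^esub>)"
  and Irr_pirreducible: "pirreducible\<^bsub>CC\<^esub> F (C.Irr F x)"
  and Irr_monic: "hd (C.Irr F x) = 1"
  and Irr_root: "C.eval (C.Irr F x) x = 0"
  using C.IrrE[OF F _ alg] by auto

lemma min_poly_over: "poly_over F (min_poly F x)"
  unfolding poly_over_def min_poly_def using coeff_poly_of_list_mem[OF Irr_carrier] subfield_CC_zero[OF F]
  by auto

lemma min_poly_root: "poly (min_poly F x) x = 0"
  using Irr_root by (simp add: min_poly_def eval_eq_poly_of_list)

lemma degree_min_poly: "degree (min_poly F x) = Polynomials.degree (C.Irr F x)"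
  unfolding min_poly_def by (rule degree_poly_of_list[OF Irr_carrier])

lemma degree_min_poly_pos: "degree (min_poly F x) \<ge> 1"
  using C.pirreducible_degree[OF F Irr_carrier Irr_pirreducible] degree_min_poly by simp

lemma min_poly_monic: "lead_coeff (min_poly F x) = 1"
proof -
  have "C.Irr F x \<noteq> []"
    using degree_min_poly_pos degree_min_poly by auto
  thus ?thesis
    using lead_coeff_poly_of_list[OF Irr_carrier] Irr_monic by (simp add: min_poly_def)
qed

lemma min_poly_nonzero: "min_poly F x \<noteq> 0"
  using min_poly_monic by auto

lemma min_poly_dvd:
  assumes "poly_over F P" "poly P x = 0"
  shows "min_poly F x dvd P"
proof -
  have "list_of_poly P \<in> carrier (F[X]\<^bsub>CC\<^esub>)"
    using assms(1) list_of_poly_carrier poly_over_def by auto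
  moreover have "C.eval (list_of_poly P) x = 0"
    using assms(2) by (simp add: eval_list_of_poly)
  ultimately have "C.Irr F x pdivides\<^bsub>CC\<^esub> list_of_poly P"
    using C.Irr_minimal[OF F _ alg] by auto
  thus ?thesis
    using pdivides_imp_dvd unfolding min_poly_def by fastforce
qed

lemma degree_min_poly_le:
  assumes "poly_over F P" "poly P x = 0" "P \<noteq> 0"
  shows "degree (min_poly F x) \<le> degree P"
  using min_poly_dvd[OF assms(1,2)] assms(3) by (simp add: dvd_imp_degree_le)

lemma dimension_adjoin: "C.dimension (degree (min_poly F x)) F (adjoin F x)"
  using C.dimension_simple_extension[OF F _ alg] degree_min_poly by simp

lemma subfield_adjoin: "subfield (adjoin F x) CC"
  using C.simple_extension_is_subfield[OF F] alg by simp

end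

lemma degree_min_poly_eq_if_adjoin_eq:
  assumes "subfield F CC" "algebraic_over F x" "algebraic_over F y" "adjoin F x = adjoin F y"
  shows "degree (min_poly F x) = degree (min_poly F y)"
  using C.dimension_is_inj[OF assms(1) dimension_adjoin[OF assms(1,2)]] dimension_adjoin[OF assms(1,3)]
    assms(4) by simp

lemma subset_adjoin: "F \<subseteq> adjoin F x"
  by (rule C.simple_extension_incl) auto

lemma mem_adjoin: "subring F CC \<Longrightarrow> x \<in> adjoin F x"
  by (rule C.simple_extension_mem) auto

lemma subring_adjoin: "subring F CC \<Longrightarrow> subring (adjoin F x) CC"
  by (rule C.simple_extension_is_subring) auto

lemma adjoin_subset_iff:
  assumes "subring F CC" "subring E CC"
  shows "adjoin F x \<subseteq> E \<longleftrightarrow> F \<subseteq> E \<and> x \<in> E"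
  using C.simple_extension_subring_incl[OF assms(2)] subset_adjoin mem_adjoin[OF assms(1)] by blast

lemma subfield_algebraic_over: "subfield F CC \<Longrightarrow> subfield {x. algebraic_over F x} CC"
  using field.subfield_of_algebraics[OF field_CC] by simp

lemma subalgebra_subfield:
  assumes "subfield E CC" "K \<subseteq> E"
  shows "subalgebra K E CC"
  using subring.axioms(1)[OF subfieldE(1)[OF assms(1)]] subfield_CC_mult[OF assms(1)] assms(2)
  unfolding subalgebra_def subalgebra_axioms_def by auto

lemma adjoin_mult_const:
  assumes F: "subfield F CC" and c: "c \<in> F" "c \<noteq> 0" and \<theta>: "algebraic_over F \<theta>"
  shows "adjoin F (c * \<theta>) = adjoin F \<theta>"
proof -
  have F': "subring F CC" using subfieldE(1)[OF F] .
  have c\<theta>: "algebraic_over F (c * \<theta>)"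
    using subfield_CC_mult[OF subfield_algebraic_over[OF F]] C.algebraic_self[OF F' c(1)] \<theta> by auto
  have "c * \<theta> \<in> adjoin F \<theta>"
    using subfield_CC_mult[OF subfield_adjoin[OF F \<theta>]] subset_adjoin[of F \<theta>] c(1) mem_adjoin[OF F']
    by blast
  moreover have "(c * \<theta>) / c \<in> adjoin F (c * \<theta>)"
    using subfield_CC_divide[OF subfield_adjoin[OF F c\<theta>]] subset_adjoin[of F "c * \<theta>"] c(1)
      mem_adjoin[OF F'] by blast
  hence "\<theta> \<in> adjoin F (c * \<theta>)" using c(2) by simp
  ultimately show ?thesis
    using adjoin_subset_iff[OF F' subring_adjoin[OF F']] subset_adjoin by blast
qed

lemma poly_over_mono: "F \<subseteq> G \<Longrightarrow> poly_over F P \<Longrightarrow> poly_over G P"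
  by (auto simp: poly_over_def)

lemma poly_over_pCons: "poly_over F (pCons a P) \<longleftrightarrow> a \<in> F \<and> poly_over F P"
  unfolding poly_over_def by (metis coeff_pCons_0 coeff_pCons_Suc not0_implies_Suc)

context
  fixes F assumes F: "subfield F CC"
begin

lemma poly_over_0: "poly_over F 0"
  using subfield_CC_zero[OF F] by (simp add: poly_over_def)

lemma poly_over_const: "a \<in> F \<Longrightarrow> poly_over F [:a:]"
  using poly_over_0 by (simp add: poly_over_pCons)

lemma poly_over_add: "poly_over F P \<Longrightarrow> poly_over F Q \<Longrightarrow> poly_over F (P + Q)"
  using subfield_CC_add[OF F] by (auto simp: poly_over_def)

lemma poly_over_diff: "poly_over F P \<Longrightarrow> poly_over F Q \<Longrightarrow> poly_over F (P - Q)"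
  using subfield_CC_diff[OF F] by (auto simp: poly_over_def)

lemma poly_over_smult: "a \<in> F \<Longrightarrow> poly_over F P \<Longrightarrow> poly_over F (smult a P)"
  using subfield_CC_mult[OF F] by (auto simp: poly_over_def)

lemma poly_over_monom: "a \<in> F \<Longrightarrow> poly_over F (monom a n)"
  using subfield_CC_zero[OF F] by (auto simp: poly_over_def coeff_monom)

lemma poly_over_mult: "poly_over F P \<Longrightarrow> poly_over F Q \<Longrightarrow> poly_over F (P * Q)"
proof (induct P)
  case (pCons a P)
  then show ?case
    using poly_over_0 subfield_CC_zero[OF F]
    by (auto simp: poly_over_pCons intro!: poly_over_add poly_over_smult)
qed (simp add: poly_over_0)

lemma poly_over_pcompose: "poly_over F P \<Longrightarrow> poly_over F Q \<Longrightarrow> poly_over F (pcompose P Q)"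
proof (induct P)
  case (pCons a P)
  then show ?case
    by (auto simp: pcompose_pCons poly_over_pCons intro!: poly_over_add poly_over_mult poly_over_const)
qed (simp add: poly_over_0)

lemma poly_over_pderiv: "poly_over F P \<Longrightarrow> poly_over F (pderiv P)"
  unfolding poly_over_def coeff_pderiv using subfield_CC_mult[OF F] subfield_CC_of_nat[OF F] by blast

lemma poly_over_radical: "a \<in> F \<Longrightarrow> poly_over F (monom 1 n - [:a:])"
  using poly_over_diff poly_over_monom poly_over_const subfield_CC_one[OF F] by blast

end

lemma degree_radical_poly: "n \<ge> 1 \<Longrightarrow> degree (monom (1::complex) n - [:a:]) = n"
  unfolding diff_conv_add_uminus by (subst degree_add_eq_left) (auto simp: degree_monom_eq)

lemma radical_poly_nonzero: "n \<ge> 1 \<Longrightarrow> monom (1::complex) n - [:a:] \<noteq> 0"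
  using degree_radical_poly by fastforce

lemma degree_min_poly_antimono:
  assumes "subfield F CC" "subfield F' CC" "F \<subseteq> F'" "algebraic_over F x"
  shows "degree (min_poly F' x) \<le> degree (min_poly F x)"
proof -
  have "algebraic_over F' x"
    using C.algebraic_mono[OF assms(3)] assms(4) by blast
  thus ?thesis
    using degree_min_poly_le[OF assms(2) _ poly_over_mono[OF assms(3) min_poly_over[OF assms(1,4)]]]
      min_poly_root[OF assms(1,4)] min_poly_nonzero[OF assms(1,4)] by blast
qed

context
  fixes F x n assumes F: "subfield F CC" and n: "n \<ge> 1" and radical: "x ^ n \<in> F"
begin

lemma algebraic_over_radical: "algebraic_over F x"
  by (rule algebraic_overI[OF poly_over_radical[OF F radical] radical_poly_nonzero[OF n]])
    (simp add: poly_monom)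

lemma degree_min_poly_radical_le: "degree (min_poly F x) \<le> n"
proof -
  have "degree (min_poly F x) \<le> degree (monom 1 n - [:x ^ n:])"
    by (rule degree_min_poly_le[OF F algebraic_over_radical poly_over_radical[OF F radical] _
          radical_poly_nonzero[OF n]]) (simp add: poly_monom)
  thus ?thesis using degree_radical_poly[OF n] by simp
qed

end

lemma subfield_compositum: "subfield (compositum L L') CC"
  unfolding compositum_def by (rule field.generate_field_is_subfield[OF field_CC]) simp

lemma compositum_upper: "L \<subseteq> compositum L L'" "L' \<subseteq> compositum L L'"
  using field.generate_fieldE(2)[OF field_CC, of "L \<union> L'"] unfolding compositum_def by auto

lemma compositum_subset_iff:
  assumes "subfield E CC"
  shows "compositum L L' \<subseteq> E \<longleftrightarrow> L \<subseteq> E \<and> L' \<subseteq> E"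
  using field.generate_field_min_subfield1[OF field_CC _ assms] compositum_upper
  unfolding compositum_def by (metis CC_simps(1) Un_subset_iff subset_UNIV subset_trans)

lemma compositum_commute: "compositum L L' = compositum L' L"
  by (simp add: compositum_def Un_commute)

lemma compositum_self: "subfield K CC \<Longrightarrow> compositum K K = K"
  using compositum_subset_iff[of K K K] compositum_upper[of K K] by blast

lemma subfield_number_field: "number_field M \<Longrightarrow> subfield M CC"
  by (simp add: number_field_def)

lemma number_field_algebraic: "number_field M \<Longrightarrow> x \<in> M \<Longrightarrow> algebraic_over \<rat> x"
  using C.finite_dimension_imp_algebraic[OF subfield_Rats subfieldE(1)]
  unfolding number_field_def C.finite_dimension_def by blast

lemma number_field_finite_extension:
  assumes "number_field M" "subfield E CC" "C.dimension m M E"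
  shows "number_field E"
  using assms C.telescopic_base[OF subfield_Rats subfield_number_field[OF assms(1)] _ assms(3)]
  unfolding number_field_def by blast

section \<open>The primitive element theorem\<close>

lemma mem_if_min_poly_unique_root:
  assumes F: "subfield F CC" and alg: "algebraic_over F x"
    and unique_root: "\<And>z. poly (min_poly F x) z = 0 \<Longrightarrow> z = x"
  shows "x \<in> F"
proof -
  let ?m = "min_poly F x"
  have m0: "?m \<noteq> 0" using min_poly_nonzero[OF F alg] .
  have "degree ?m = 1"
  proof (rule ccontr)
    assume "degree ?m \<noteq> 1"
    then have deg2: "degree ?m \<ge> 2" using degree_min_poly_pos[OF F alg] by linarith
    have "set_mset (proots ?m) \<subseteq> {x}" using unique_root m0 by auto
    hence "proots ?m = replicate_mset (degree ?m) x"
      by (metis set_mset_subset_singletonD size_proots_complex)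
    hence "order x ?m = degree ?m"
      using m0 by (metis count_proots count_replicate_mset)
    hence "order x (pderiv ?m) \<noteq> 0"
      using order_pderiv[OF m0 min_poly_root[OF F alg]] deg2 by simp
    hence "poly (pderiv ?m) x = 0" using order_root by blast
    moreover have "pderiv ?m \<noteq> 0" using deg2 by (simp add: pderiv_eq_0_iff)
    ultimately have "degree ?m \<le> degree (pderiv ?m)"
      using degree_min_poly_le[OF F alg poly_over_pderiv[OF F min_poly_over[OF F alg]]] by simp
    thus False using degree_pderiv[of ?m] deg2 by simp
  qed
  then have "poly ?m x = coeff ?m 0 + x"
    using min_poly_monic[OF F alg] by (simp add: poly_altdef)
  hence "x = - coeff ?m 0"
    using min_poly_root[OF F alg] by (simp add: eq_neg_iff_add_eq_0 add.commute)
  thus ?thesis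
    using min_poly_over[OF F alg] subfield_CC_uminus[OF F] unfolding poly_over_def by metis
qed

text \<open>The classical argument: \<open>\<gamma>\<close> is the only common root of the minimal polynomial of \<open>\<gamma>\<close> and of
  \<open>f (\<beta> + c \<gamma> - c X)\<close>, where \<open>f\<close> is the minimal polynomial of \<open>\<beta>\<close>, once \<open>c\<close> avoids the finitely
  many values \<open>(b - \<beta>) / (\<gamma> - z)\<close> for roots \<open>b\<close> of \<open>f\<close> and \<open>z \<noteq> \<gamma>\<close> of the minimal polynomial of \<open>\<gamma>\<close>.\<close>

lemma mem_adjoin_linear_combination:
  assumes F: "subfield F CC" and \<beta>: "algebraic_over F \<beta>" and \<gamma>: "algebraic_over F \<gamma>" and c: "c \<in> F"
    and separating: "\<And>b z. poly (min_poly F \<beta>) b = 0 \<Longrightarrow> poly (min_poly F \<gamma>) z = 0 \<Longrightarrow> z \<noteq> \<gamma>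
                      \<Longrightarrow> \<beta> + c * \<gamma> \<noteq> b + c * z"
  shows "\<gamma> \<in> adjoin F (\<beta> + c * \<gamma>)"
proof -
  define \<theta> where "\<theta> = \<beta> + c * \<gamma>"
  define E where "E = adjoin F \<theta>"
  have "algebraic_over F \<theta>"
    using subfield_CC_closed[OF subfield_algebraic_over[OF F]] \<beta> \<gamma> c
      C.algebraic_self[OF subfieldE(1)[OF F] c] unfolding \<theta>_def by auto
  hence E: "subfield E CC" unfolding E_def by (rule subfield_adjoin[OF F])
  have FE: "F \<subseteq> E" and \<theta>E: "\<theta> \<in> E"
    unfolding E_def using subset_adjoin mem_adjoin[OF subfieldE(1)[OF F]] by auto
  have \<gamma>E: "algebraic_over E \<gamma>" using C.algebraic_mono[OF FE] \<gamma> by blast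
  define h where "h = pcompose (min_poly F \<beta>) [:\<theta>, - c:]"
  have "poly_over E h"
    unfolding h_def using \<theta>E subfield_CC_closed[OF E] c FE
    by (auto intro!: poly_over_pcompose[OF E] poly_over_mono[OF FE min_poly_over[OF F \<beta>]]
        simp: poly_over_pCons poly_over_0[OF E])
  moreover have "poly h \<gamma> = 0"
    unfolding h_def \<theta>_def using min_poly_root[OF F \<beta>] by (simp add: poly_pcompose)
  ultimately have dvd_h: "min_poly E \<gamma> dvd h" by (rule min_poly_dvd[OF E \<gamma>E])
  have dvd_G: "min_poly E \<gamma> dvd min_poly F \<gamma>"
    using min_poly_dvd[OF E \<gamma>E poly_over_mono[OF FE min_poly_over[OF F \<gamma>]]] min_poly_root[OF F \<gamma>] .
  have "\<gamma> \<in> E"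
  proof (rule mem_if_min_poly_unique_root[OF E \<gamma>E])
    fix z assume z: "poly (min_poly E \<gamma>) z = 0"
    have "poly h z = 0" "poly (min_poly F \<gamma>) z = 0"
      using dvd_h dvd_G z by (metis dvd_def mult_eq_0_iff poly_mult)+
    thus "z = \<gamma>"
      using separating[of "\<theta> - c * z" z] unfolding h_def \<theta>_def by (auto simp: poly_pcompose algebra_simps)
  qed
  thus ?thesis unfolding E_def \<theta>_def .
qed

lemma primitive_element_pair:
  assumes F: "subfield F CC" and \<beta>: "algebraic_over F \<beta>" and \<gamma>: "algebraic_over F \<gamma>"
  shows "\<exists>c::nat. \<gamma> \<in> adjoin F (\<beta> + of_nat c * \<gamma>)"
proof -
  let ?f = "min_poly F \<beta>" and ?G = "min_poly F \<gamma>"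
  define bad where "bad = (\<lambda>(b, z). (b - \<beta>) / (\<gamma> - z)) ` ({b. poly ?f b = 0} \<times> {z. poly ?G z = 0})"
  have "finite bad"
    unfolding bad_def using poly_roots_finite[OF min_poly_nonzero[OF F \<beta>]]
      poly_roots_finite[OF min_poly_nonzero[OF F \<gamma>]] by auto
  hence "finite {c::nat. of_nat c \<in> bad}"
    by (rule finite_vimageI[of bad "of_nat", unfolded vimage_def]) (simp add: inj_on_def)
  then obtain c :: nat where c: "of_nat c \<notin> bad"
    by (metis (mono_tags, lifting) infinite_UNIV_nat ex_new_if_finite mem_Collect_eq)
  have "\<beta> + of_nat c * \<gamma> \<noteq> b + of_nat c * z"
    if "poly ?f b = 0" "poly ?G z = 0" "z \<noteq> \<gamma>" for b z
  proof
    assume "\<beta> + of_nat c * \<gamma> = b + of_nat c * z"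
    hence "of_nat c = (b - \<beta>) / (\<gamma> - z)" using that(3) by (simp add: field_simps)
    thus False using c that(1,2) unfolding bad_def by force
  qed
  thus ?thesis
    using mem_adjoin_linear_combination[OF F \<beta> \<gamma> subfield_CC_of_nat[OF F]] by blast
qed

context
  fixes F M assumes F: "subfield F CC" and M: "subfield M CC" and FM: "F \<subseteq> M"
    and alg: "\<And>x. x \<in> M \<Longrightarrow> algebraic_over F x"
begin

lemma primitive_element_list: "set xs \<subseteq> M \<Longrightarrow> \<exists>\<theta>\<in>M. set xs \<subseteq> adjoin F \<theta>"
proof (induct xs)
  case Nil thus ?case using subfield_CC_zero[OF M] by auto
next
  case (Cons x xs)
  then obtain \<theta> where \<theta>: "\<theta> \<in> M" "set xs \<subseteq> adjoin F \<theta>" and x: "x \<in> M" by auto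
  obtain c :: nat where c: "x \<in> adjoin F (\<theta> + of_nat c * x)"
    using primitive_element_pair[OF F alg alg] \<theta>(1) x by blast
  define \<eta> where "\<eta> = \<theta> + of_nat c * x"
  have \<eta>M: "\<eta> \<in> M" unfolding \<eta>_def using subfield_CC_closed[OF M] \<theta>(1) x by auto
  have E: "subfield (adjoin F \<eta>) CC" using subfield_adjoin[OF F alg[OF \<eta>M]] .
  have "x \<in> adjoin F \<eta>" using c unfolding \<eta>_def .
  hence "\<eta> - of_nat c * x \<in> adjoin F \<eta>"
    using subfield_CC_closed[OF E] mem_adjoin[OF subfieldE(1)[OF F], of \<eta>] by auto
  moreover have "\<eta> - of_nat c * x = \<theta>" unfolding \<eta>_def by simp
  ultimately have "adjoin F \<theta> \<subseteq> adjoin F \<eta>"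
    using adjoin_subset_iff[OF subfieldE(1)[OF F] subfieldE(1)[OF E]] subset_adjoin by blast
  thus ?case using \<theta> c \<eta>M unfolding \<eta>_def by auto
qed

theorem primitive_element:
  assumes "C.dimension n F M"
  shows "\<exists>\<theta>\<in>M. M = adjoin F \<theta>"
proof -
  obtain Us where Us: "set Us \<subseteq> carrier CC" "C.Span F Us = M"
    using C.exists_base[OF F assms] by auto
  have "set Us \<subseteq> M" using C.Span_base_incl[OF F Us(1)] Us(2) by auto
  then obtain \<theta> where \<theta>: "\<theta> \<in> M" "set Us \<subseteq> adjoin F \<theta>" using primitive_element_list by blast
  have "subalgebra F (adjoin F \<theta>) CC"
    using subalgebra_subfield[OF subfield_adjoin[OF F alg[OF \<theta>(1)]] subset_adjoin] .
  hence "M \<subseteq> adjoin F \<theta>"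
    using C.subalgebra_Span_incl[OF F _ \<theta>(2)] Us(2) by simp
  moreover have "adjoin F \<theta> \<subseteq> M"
    using adjoin_subset_iff[OF subfieldE(1)[OF F] subfieldE(1)[OF M]] FM \<theta>(1) by blast
  ultimately show ?thesis using \<theta>(1) by blast
qed

end

lemma number_field_primitive_element:
  assumes "number_field M"
  shows "\<exists>\<theta>\<in>M. M = adjoin \<rat> \<theta>"
  using primitive_element[OF subfield_Rats subfield_number_field[OF assms]
      Rats_subset_subfield_CC[OF subfield_number_field[OF assms]] number_field_algebraic[OF assms]]
    assms unfolding number_field_def by blast

section \<open>Integral models of number fields\<close>

abbreviation cpoly :: "int poly \<Rightarrow> complex poly" where
  "cpoly \<equiv> map_poly of_int"

lemma map_poly_of_int_add:
  "map_poly (of_int :: int \<Rightarrow> 'a::comm_ring_1) (p + q) = map_poly of_int p + map_poly of_int q"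
  by (rule poly_eqI) (simp add: coeff_map_poly)

lemma map_poly_of_int_diff:
  "map_poly (of_int :: int \<Rightarrow> 'a::comm_ring_1) (p - q) = map_poly of_int p - map_poly of_int q"
  by (rule poly_eqI) (simp add: coeff_map_poly)

lemma map_poly_of_int_mult:
  "map_poly (of_int :: int \<Rightarrow> 'a::comm_ring_1) (p * q) = map_poly of_int p * map_poly of_int q"
  by (rule poly_eqI) (simp add: coeff_map_poly coeff_mult)

lemma map_poly_of_int_power:
  "map_poly (of_int :: int \<Rightarrow> 'a::comm_ring_1) (p ^ n) = map_poly of_int p ^ n"
  by (induct n) (simp_all add: map_poly_of_int_mult)

lemma map_poly_of_int_const: "map_poly (of_int :: int \<Rightarrow> 'a::comm_ring_1) [:c:] = [:of_int c:]"
  by (simp add: map_poly_pCons)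

lemma map_poly_of_int_pderiv:
  "map_poly (of_int :: int \<Rightarrow> 'a::idom) (pderiv p) = pderiv (map_poly of_int p)"
  by (rule poly_eqI) (simp add: coeff_map_poly coeff_pderiv)

lemma map_poly_of_int_smult:
  "map_poly (of_int :: int \<Rightarrow> 'a::comm_ring_1) (smult c p) = smult (of_int c) (map_poly of_int p)"
  by (simp add: map_poly_smult)

lemma map_poly_of_int_eq_iff:
  "map_poly (of_int :: int \<Rightarrow> 'a::{comm_ring_1,ring_char_0}) p = map_poly of_int q \<longleftrightarrow> p = q"
  by (metis (mono_tags) coeff_map_poly of_int_0 of_int_eq_iff poly_eqI)

lemma degree_map_poly_of_int:
  "degree (map_poly (of_int :: int \<Rightarrow> 'a::{comm_ring_1,ring_char_0}) p) = degree p"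
  by (rule degree_map_poly) simp

lemma degree_map_poly_of_rat: "degree (map_poly (of_rat :: rat \<Rightarrow> complex) p) = degree p"
  by (rule degree_map_poly) simp

lemma map_poly_of_rat_mult:
  "map_poly (of_rat :: rat \<Rightarrow> complex) (p * q) = map_poly of_rat p * map_poly of_rat q"
  by (rule poly_eqI) (simp add: coeff_map_poly coeff_mult of_rat_sum of_rat_mult)

lemma map_poly_of_rat_of_int: "map_poly (of_rat :: rat \<Rightarrow> complex) (map_poly of_int p) = cpoly p"
  by (rule poly_eqI) (simp add: coeff_map_poly)

lemma poly_over_Rats_map_poly_of_rat: "poly_over \<rat> (map_poly of_rat p)"
  by (simp add: poly_over_def coeff_map_poly)

lemma rat_poly_clear_denominators:
  fixes P :: "rat poly"
  shows "\<exists>d Q. d > (0::int) \<and> smult (of_int d) P = map_poly of_int Q"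
proof (induct P)
  case 0
  show ?case by (rule exI[of _ 1], rule exI[of _ 0]) simp
next
  case (pCons a P)
  then obtain d Q where dQ: "d > 0" "smult (of_int d) P = map_poly of_int Q" by blast
  obtain x y where "quotient_of a = (x, y)" by fastforce
  then have y: "y > 0" and a: "a = of_int x / of_int y"
    by (simp_all add: quotient_of_denom_pos quotient_of_div)
  have "smult (of_int (d * y)) P = smult (of_int y) (smult (of_int d) P)"
    by (simp add: mult.commute)
  also have "\<dots> = map_poly of_int (smult y Q)"
    using dQ(2) by (simp add: map_poly_of_int_smult)
  finally have "smult (of_int (d * y)) P = map_poly of_int (smult y Q)" .
  moreover have "of_int (d * y) * a = of_int (d * x)"
    using y a by simp
  ultimately have "smult (of_int (d * y)) (pCons a P) = map_poly of_int (pCons (d * x) (smult y Q))"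
    by (simp add: map_poly_pCons)
  thus ?case using dQ(1) y by (intro exI[of _ "d * y"]) auto
qed

lemma poly_over_Rats_clear_denominators:
  assumes "poly_over \<rat> P"
  shows "\<exists>d Q. d > (0::int) \<and> smult (of_int d) P = cpoly Q"
proof -
  obtain R where R: "P = map_poly of_rat R"
    using assms ratpolyE unfolding poly_over_def by blast
  obtain d Q where dQ: "d > 0" "smult (of_int d) R = map_poly of_int Q"
    using rat_poly_clear_denominators by blast
  have "smult (of_int d) P = map_poly of_rat (smult (of_int d) R)"
    unfolding R by (simp add: map_poly_smult of_rat_mult)
  thus ?thesis using dQ by (auto simp: map_poly_of_rat_of_int)
qed

lemma adjoin_Rats_elem_int_poly:
  assumes "x \<in> adjoin \<rat> t"
  shows "\<exists>P d. d \<noteq> (0::int) \<and> of_int d * x = poly (cpoly P) t"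
proof -
  obtain l where l: "l \<in> carrier (\<rat>[X]\<^bsub>CC\<^esub>)" "x = C.eval l t"
    using assms C.simple_extension_as_eval_img[of \<rat> t] by auto
  have "poly_over \<rat> (poly_of_list l)"
    unfolding poly_over_def using coeff_poly_of_list_mem[OF l(1)] by auto
  then obtain d P where "d > 0" "smult (of_int d) (poly_of_list l) = cpoly P"
    using poly_over_Rats_clear_denominators by blast
  moreover from this have "of_int d * x = poly (cpoly P) t"
    unfolding l(2) eval_eq_poly_of_list by (metis poly_smult)
  ultimately show ?thesis by (intro exI[of _ P] exI[of _ d]) auto
qed

lemma monic_dvd_imp_eq:
  fixes p q :: "'a::idom poly"
  assumes "lead_coeff p = 1" "lead_coeff q = 1" "p dvd q" "degree q \<le> degree p"
  shows "p = q"
proof -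
  obtain k where k: "q = p * k" using assms(3) by (auto elim: dvdE)
  have "k \<noteq> 0" "p \<noteq> 0" using assms(1,2) k by auto
  hence "degree k = 0" using k assms(4) by (simp add: degree_mult_eq)
  moreover have "lead_coeff k = 1" using k assms(1,2) by (simp add: lead_coeff_mult)
  ultimately have "k = 1" by (metis degree_eq_zeroE lead_coeff_pCons(2) one_pCons)
  thus ?thesis using k by simp
qed

lemma coeff_rescale_poly:
  fixes f :: "complex poly" and c :: complex
  assumes "c \<noteq> 0"
  shows "coeff (smult (c ^ degree f) (pcompose f [:0, 1 / c:])) i
           = (if i \<le> degree f then c ^ (degree f - i) * coeff f i else 0)"
proof -
  have "coeff (smult (c ^ degree f) (pcompose f [:0, 1 / c:])) i = c ^ degree f / c ^ i * coeff f i"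
    by (simp add: coeff_pcompose_linear power_one_over)
  thus ?thesis
    using assms by (auto simp: power_diff coeff_eq_0)
qed

text \<open>\<open>d\<^sup>n f(X/d)\<close> is monic with roots \<open>d\<alpha>\<close>, and integral once \<open>d\<close> clears the denominators of \<open>f\<close>.\<close>

lemma monic_rescale_poly_int:
  fixes f :: "complex poly" and d :: int
  assumes monic: "lead_coeff f = 1" and d: "d \<noteq> 0" and int: "\<And>i. of_int d * coeff f i \<in> \<int>"
  shows "\<exists>H. cpoly H = smult (of_int d ^ degree f) (pcompose f [:0, 1 / of_int d:])
            \<and> lead_coeff H = 1 \<and> degree H = degree f"
proof -
  let ?c = "of_int d :: complex" and ?D = "degree f"
  let ?Hc = "smult (?c ^ ?D) (pcompose f [:0, 1 / ?c:])"
  have c: "?c \<noteq> 0" using d by simp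
  have "coeff ?Hc i \<in> \<int>" for i
  proof (cases "i < ?D")
    case True
    then have "?c ^ (?D - i) = ?c ^ (?D - i - 1) * ?c"
      by (metis Suc_diff_Suc diff_Suc_1 power_Suc2 zero_less_diff)
    then have "coeff ?Hc i = ?c ^ (?D - i - 1) * (?c * coeff f i)"
      using True unfolding coeff_rescale_poly[OF c] by simp
    thus ?thesis using int by simp
  next
    case False
    then show ?thesis unfolding coeff_rescale_poly[OF c] using monic by auto
  qed
  then obtain H where H: "?Hc = cpoly H" using intpolyE by blast
  have "degree ?Hc = ?D" using c by (simp add: degree_pcompose)
  hence deg: "degree H = ?D" using H by (simp add: degree_map_poly_of_int)
  have "of_int (lead_coeff H) = lead_coeff ?Hc"
    using H by (simp add: coeff_map_poly degree_map_poly_of_int)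
  also have "\<dots> = 1"
    using monic \<open>degree ?Hc = ?D\<close> unfolding coeff_rescale_poly[OF c] by simp
  finally have "lead_coeff H = 1" by simp
  thus ?thesis using H deg by auto
qed

lemma exists_monic_int_min_poly:
  assumes \<theta>: "algebraic_over \<rat> \<theta>"
  shows "\<exists>t H. adjoin \<rat> t = adjoin \<rat> \<theta> \<and> algebraic_over \<rat> t
           \<and> lead_coeff H = 1 \<and> cpoly H = min_poly \<rat> t"
proof -
  note Q = subfield_Rats
  define f where "f = min_poly \<rat> \<theta>"
  obtain d Q where dQ: "d > 0" "smult (of_int d) f = cpoly Q"
    using poly_over_Rats_clear_denominators[OF min_poly_over[OF Q \<theta>]] f_def by blast
  have "of_int d * coeff f i \<in> \<int>" for i
    using arg_cong[OF dQ(2), of "\<lambda>p. coeff p i"] by (simp add: coeff_map_poly)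
  then obtain H where H: "cpoly H = smult (of_int d ^ degree f) (pcompose f [:0, 1 / of_int d:])"
      and monic: "lead_coeff H = 1" and degH: "degree H = degree f"
    using monic_rescale_poly_int[of f d] min_poly_monic[OF Q \<theta>] dQ(1) f_def by auto
  define t where "t = of_int d * \<theta>"
  have root: "poly (cpoly H) t = 0"
    using min_poly_root[OF Q \<theta>] dQ(1) unfolding H t_def f_def by (simp add: poly_pcompose)
  have H_over: "poly_over \<rat> (cpoly H)"
    by (simp add: poly_over_def coeff_map_poly)
  have "cpoly H \<noteq> 0" using monic by (auto simp: map_poly_eq_0_iff)
  hence t: "algebraic_over \<rat> t" by (rule algebraic_overI[OF H_over _ root])
  have eq: "adjoin \<rat> t = adjoin \<rat> \<theta>"
    unfolding t_def using adjoin_mult_const[OF Q _ _ \<theta>] dQ(1) by simp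
  have "degree (min_poly \<rat> t) = degree f"
    unfolding f_def using degree_min_poly_eq_if_adjoin_eq[OF Q t \<theta> eq] .
  moreover have "lead_coeff (cpoly H) = 1"
    using monic by (simp add: coeff_map_poly degree_map_poly_of_int)
  ultimately have "min_poly \<rat> t = cpoly H"
    using monic_dvd_imp_eq[OF min_poly_monic[OF Q t] _ min_poly_dvd[OF Q t H_over root]] degH
    by (simp add: degree_map_poly_of_int)
  thus ?thesis using eq t monic by metis
qed

context
  fixes t H assumes t: "algebraic_over \<rat> t" and H: "cpoly H = min_poly \<rat> t"
begin

lemma degree_int_min_poly: "degree H = degree (min_poly \<rat> t)"
  using H degree_map_poly_of_int by metis

lemma int_min_poly_dvd:
  assumes monic: "lead_coeff H = 1" and root: "poly (cpoly P) t = 0"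
  shows "H dvd P"
proof -
  obtain q r where qr: "pseudo_divmod P H = (q, r)" by fastforce
  have H0: "H \<noteq> 0" using monic by auto
  have P: "P = H * q + r" using pseudo_divmod(1)[OF H0 qr] monic by simp
  have r: "r = 0 \<or> degree r < degree H" using pseudo_divmod(2)[OF H0 qr] .
  have "poly (cpoly r) t = 0"
    using root min_poly_root[OF subfield_Rats t] unfolding P H[symmetric]
    by (simp add: map_poly_of_int_add map_poly_of_int_mult)
  moreover have "poly_over \<rat> (cpoly r)" by (simp add: poly_over_def coeff_map_poly)
  ultimately have "r \<noteq> 0 \<Longrightarrow> degree H \<le> degree r"
    using degree_min_poly_le[OF subfield_Rats t] degree_int_min_poly
    by (metis degree_map_poly_of_int map_poly_eq_0_iff of_int_eq_0_iff)
  hence "r = 0" using r by linarith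
  thus ?thesis using P by simp
qed

text \<open>Every proper factor of the minimal polynomial has too small a degree to vanish at \<open>t\<close>.\<close>

lemma coprime_int_min_poly_pderiv:
  "coprime (map_poly of_int H :: rat poly) (pderiv (map_poly of_int H))"
proof (rule coprimeI)
  let ?Hq = "map_poly of_int H :: rat poly" and ?D = "degree (min_poly \<rat> t)"
  let ?lift = "map_poly (of_rat :: rat \<Rightarrow> complex)"
  have D: "?D \<ge> 1" using degree_min_poly_pos[OF subfield_Rats t] .
  have degHq: "degree ?Hq = ?D" using degree_int_min_poly by (simp add: degree_map_poly_of_int)
  have minimal: "?D \<le> degree g" if "g \<noteq> 0" "poly (?lift g) t = 0" for g
    using degree_min_poly_le[OF subfield_Rats t poly_over_Rats_map_poly_of_rat] that
    by (simp add: degree_map_poly_of_rat map_poly_eq_0_iff)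
  fix g assume g: "g dvd ?Hq" "g dvd pderiv ?Hq"
  obtain k where k: "?Hq = g * k" using g(1) by (auto elim: dvdE)
  have "?Hq \<noteq> 0" "pderiv ?Hq \<noteq> 0" using degHq D by (auto simp: pderiv_eq_0_iff)
  hence g0: "g \<noteq> 0" and k0: "k \<noteq> 0" using k by auto
  have "degree g < ?D"
    using dvd_imp_degree_le[OF g(2) \<open>pderiv ?Hq \<noteq> 0\<close>] degree_pderiv[of ?Hq] degHq D by linarith
  moreover have "poly (?lift g) t * poly (?lift k) t = 0"
    using min_poly_root[OF subfield_Rats t] k
    by (metis H map_poly_of_rat_mult map_poly_of_rat_of_int poly_mult)
  ultimately have "?D \<le> degree k" using minimal g0 k0 by (metis mult_eq_0_iff not_le)
  hence "degree g = 0" using k g0 k0 degHq by (simp add: degree_mult_eq)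
  thus "is_unit g" using g0 by (simp add: is_unit_iff_degree)
qed

end

lemma int_poly_bezout_const:
  fixes H G :: "int poly"
  assumes "coprime (map_poly of_int H :: rat poly) (map_poly of_int G)"
  shows "\<exists>A B c. c \<noteq> 0 \<and> A * H + B * G = [:c:]"
proof -
  let ?q = "map_poly (of_int :: int \<Rightarrow> rat)"
  obtain A' B' where AB: "A' * ?q H + B' * ?q G = 1"
    using bezout_coefficients_fst_snd[of "?q H" "?q G"] assms by (metis coprime_imp_gcd_eq_1)
  obtain eA PA where eA: "eA > 0" "smult (of_int eA) A' = ?q PA"
    using rat_poly_clear_denominators by blast
  obtain eB PB where eB: "eB > 0" "smult (of_int eB) B' = ?q PB"
    using rat_poly_clear_denominators by blast
  have "?q (smult eB PA * H + smult eA PB * G) = smult (of_int (eA * eB)) (A' * ?q H + B' * ?q G)"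
    by (simp add: map_poly_of_int_add map_poly_of_int_mult map_poly_of_int_smult algebra_simps
        smult_add_right flip: eA(2) eB(2))
  also have "\<dots> = ?q [:eA * eB:]"
    by (simp add: AB map_poly_of_int_const)
  finally have "smult eB PA * H + smult eA PB * G = [:eA * eB:]"
    by (simp only: map_poly_of_int_eq_iff)
  moreover have "eA * eB \<noteq> 0" using eA(1) eB(1) by simp
  ultimately show ?thesis by blast
qed

section \<open>Hensel lifting and prime divisors of polynomial values\<close>

lemma diff_dvd_poly_diff: "(x - y) dvd (poly p x - poly p y)"
  for x y :: "'a::comm_ring_1"
proof (induct p)
  case (pCons a p)
  have "poly (pCons a p) x - poly (pCons a p) y = x * (poly p x - poly p y) + (x - y) * poly p y"
    by (simp add: algebra_simps)
  thus ?case using pCons(2) by simp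
qed simp

lemma square_dvd_poly_taylor_remainder: "h ^ 2 dvd (poly p (r + h) - poly p r - h * poly (pderiv p) r)"
  for h r :: "'a::idom"
proof (induct p)
  case (pCons a p)
  have "poly (pCons a p) (r + h) - poly (pCons a p) r - h * poly (pderiv (pCons a p)) r
      = r * (poly p (r + h) - poly p r - h * poly (pderiv p) r) + h * (poly p (r + h) - poly p r)"
    by (simp add: pderiv_pCons algebra_simps)
  moreover have "h ^ 2 dvd h * (poly p (r + h) - poly p r)"
    using diff_dvd_poly_diff[of "r + h" r p] by (simp add: power2_eq_square)
  ultimately show ?case using pCons(2) by simp
qed simp

lemma hensel_step:
  fixes p :: int
  assumes p: "prime p" and K: "K \<ge> 1" and r: "p ^ K dvd poly H r" and simple: "\<not> p dvd poly (pderiv H) r"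
  shows "\<exists>r'. p dvd r' - r \<and> p ^ Suc K dvd poly H r'"
proof -
  obtain w where w: "poly H r = p ^ K * w" using r by (auto elim: dvdE)
  have "coprime (poly (pderiv H) r) p"
    using simple p by (metis coprime_commute prime_imp_coprime)
  then obtain u v where uv: "u * poly (pderiv H) r + v * p = 1"
    by (metis bezout_int coprime_iff_gcd_eq_1)
  define h where "h = - w * u * p ^ K"
  obtain G where G: "poly H (r + h) - poly H r - h * poly (pderiv H) r = h ^ 2 * G"
    using square_dvd_poly_taylor_remainder[of h H r] by (auto elim: dvdE)
  have "poly H (r + h) = p ^ K * (w * (1 - u * poly (pderiv H) r)) + h ^ 2 * G"
    using G w unfolding h_def by (simp add: algebra_simps)
  also have "1 - u * poly (pderiv H) r = v * p" using uv by linarith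
  also have "h ^ 2 = p ^ K * p ^ K * (w * u) ^ 2"
    unfolding h_def by (simp add: power2_eq_square algebra_simps)
  also have "p ^ K * p ^ K = p ^ Suc K * p ^ (K - 1)"
    using K by (cases K) (simp_all add: algebra_simps)
  finally have "poly H (r + h) = p ^ Suc K * (w * v + p ^ (K - 1) * (w * u) ^ 2 * G)"
    by (simp add: algebra_simps)
  hence "p ^ Suc K dvd poly H (r + h)" by simp
  moreover have "p dvd (r + h) - r" unfolding h_def using K by (simp add: dvd_power)
  ultimately show ?thesis by blast
qed

lemma hensel_lifting:
  fixes p :: int
  assumes p: "prime p" and root: "p dvd poly H r\<^sub>0" and simple: "\<not> p dvd poly (pderiv H) r\<^sub>0"
  shows "K \<ge> 1 \<Longrightarrow> \<exists>r. p dvd r - r\<^sub>0 \<and> p ^ K dvd poly H r"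
proof (induct K rule: dec_induct)
  case base
  show ?case using root by (intro exI[of _ r\<^sub>0]) auto
next
  case (step K)
  then obtain r where r: "p dvd r - r\<^sub>0" "p ^ K dvd poly H r" by auto
  have "p dvd poly (pderiv H) r - poly (pderiv H) r\<^sub>0"
    using dvd_trans[OF r(1) diff_dvd_poly_diff] .
  hence "\<not> p dvd poly (pderiv H) r"
    using simple dvd_diff[of p "poly (pderiv H) r"] by fastforce
  then obtain r' where "p dvd r' - r" "p ^ Suc K dvd poly H r'"
    using hensel_step[OF p step(1) r(2)] by blast
  moreover have "p dvd r' - r\<^sub>0" using dvd_add[OF \<open>p dvd r' - r\<close> r(1)] by simp
  ultimately show ?case by blast
qed

lemma multiplicity_eq_if_congruent:
  fixes p x y :: int
  assumes p: "prime p" and x: "x \<noteq> 0" and cong: "p ^ Suc (multiplicity p x) dvd y - x"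
  shows "y \<noteq> 0" "multiplicity p y = multiplicity p x"
proof -
  let ?m = "multiplicity p x"
  have "\<not> is_unit p" using p by (metis not_prime_unit)
  then obtain x' where x': "x = p ^ ?m * x'" "\<not> p dvd x'"
    using multiplicity_decompose'[OF x] by blast
  obtain w where w: "y - x = p ^ Suc ?m * w" using cong by (auto elim: dvdE)
  have y: "y = p ^ ?m * (x' + p * w)" using x' w by (simp add: algebra_simps eq_diff_eq)
  have not_dvd: "\<not> p dvd x' + p * w" using x'(2) by (simp add: dvd_add_left_iff)
  have p0: "p \<noteq> 0" using p by auto
  show "y \<noteq> 0" using y not_dvd p0 by auto
  show "multiplicity p y = ?m" by (rule multiplicity_decomposeI[OF y not_dvd p0])
qed

lemma not_nth_power_mod_prime_power:
  fixes p d u :: int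
  assumes p: "prime p" and k: "0 < k" "k < n" and d: "d \<noteq> 0"
  shows "\<not> p ^ Suc (n * multiplicity p d + k) dvd u ^ n - d ^ n * p ^ k"
proof
  let ?X = "d ^ n * p ^ k"
  have pe: "prime_elem p" using p by (rule prime_imp_prime_elem)
  have p0: "p \<noteq> 0" using prime_gt_0_int[OF p] by simp
  have X0: "?X \<noteq> 0" using d p0 by simp
  have "multiplicity p ?X = multiplicity p (d ^ n) + multiplicity p (p ^ k)"
    using d p0 by (intro prime_elem_multiplicity_mult_distrib[OF pe]) simp_all
  hence vX: "multiplicity p ?X = n * multiplicity p d + k"
    using d by (simp add: prime_elem_multiplicity_power_distrib[OF pe] multiplicity_prime_power[OF pe])
  assume "p ^ Suc (n * multiplicity p d + k) dvd u ^ n - ?X"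
  hence "u ^ n \<noteq> 0" "multiplicity p (u ^ n) = n * multiplicity p d + k"
    using multiplicity_eq_if_congruent[OF p X0] vX by metis+
  hence "n * multiplicity p u = n * multiplicity p d + k"
    using prime_elem_multiplicity_power_distrib[OF pe, of u n] by auto
  hence "k = n * (multiplicity p u - multiplicity p d)" by (simp add: diff_mult_distrib2)
  thus False using k by (metis mult_0_right nat_0_less_mult_iff nat_less_le nat_mult_le_cancel1 not_le
      less_one mult.right_neutral)
qed

lemma prime_divisor_gt_if_fact_dvd:
  fixes V :: int
  assumes N: "N \<ge> 2" and cong: "fact N dvd V - 1" and V: "V \<noteq> 1" "V \<noteq> -1"
  shows "\<exists>q. prime q \<and> q > int N \<and> q dvd V"
proof -
  have "V \<noteq> 0"
  proof
    assume "V = 0"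
    hence "(fact N :: int) dvd 1" using cong by simp
    moreover have "(fact N :: int) \<ge> fact 2" using N by (intro fact_mono) auto
    ultimately show False by (simp add: eval_nat_numeral zdvd1_eq)
  qed
  moreover have "\<not> is_unit V" using V by auto
  ultimately obtain q where q: "q dvd V" "prime q" using prime_divisor_exists by blast
  have "q > int N"
  proof (rule ccontr)
    assume "\<not> q > int N"
    hence "nat q dvd fact N" using prime_ge_1_int[OF q(2)] by (intro dvd_fact) auto
    hence "q dvd fact N" using prime_ge_0_int[OF q(2)] by (metis int_dvd_int_iff nat_0_le of_nat_fact)
    hence "q dvd V - (V - 1)" using dvd_diff[OF q(1) dvd_trans[OF _ cong]] by blast
    thus False using q(2) by (simp add: not_prime_unit)
  qed
  thus ?thesis using q by blast
qed

text \<open>Schur's theorem. For \<open>c = H(0) \<noteq> 0\<close> one has \<open>H(c N! t) = c (1 + N! t Q(c N! t))\<close>, and the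
  second factor is \<open>\<equiv> 1 (mod N!)\<close>, so all its prime factors exceed \<open>N\<close>.\<close>

theorem exists_large_prime_divisor_poly_value:
  fixes H :: "int poly" and B :: int
  assumes "degree H \<ge> 1"
  shows "\<exists>p r. prime p \<and> p > B \<and> p dvd poly H r"
proof (cases "poly H 0 = 0")
  case True
  obtain q :: nat where "prime q" "q > nat B" using bigger_prime by blast
  thus ?thesis using True by (intro exI[of _ "int q"] exI[of _ 0]) auto
next
  case False
  define c where "c = poly H 0"
  obtain Q where HQ: "H = pCons c Q"
    using c_def by (metis pCons_cases poly_0_coeff_0 coeff_pCons_0)
  have "Q \<noteq> 0" using assms HQ by auto
  define N where "N = nat (max B 3)"
  define F :: int where "F = fact N"
  have "(fact 3 :: int) \<le> F" unfolding F_def N_def by (intro fact_mono) auto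
  hence F: "F \<ge> 3" by (simp add: eval_nat_numeral)
  define W where "W = [:0, 1:] * pcompose Q [:0, c * F:]"
  have "W \<noteq> 0"
    using pcompose_eq_0_iff[of "[:0, c * F:]" Q] \<open>Q \<noteq> 0\<close> False F unfolding W_def c_def by auto
  then obtain t where t: "poly W t \<noteq> 0" using poly_all_0_iff_0 by blast
  define V where "V = 1 + F * poly W t"
  have "3 \<le> F * 1" using F by simp
  also have "\<dots> \<le> F * \<bar>poly W t\<bar>" using t F by (intro mult_left_mono) auto
  also have "\<dots> = \<bar>F * poly W t\<bar>" using F by (simp add: abs_mult)
  finally have "V \<noteq> 1" "V \<noteq> -1" unfolding V_def by auto
  moreover have "fact N dvd V - 1" unfolding V_def F_def by simp
  moreover have "N \<ge> 2" unfolding N_def by simp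
  ultimately obtain q where q: "prime q" "q > int N" "q dvd V"
    using prime_divisor_gt_if_fact_dvd[of N V] by blast
  have "poly H (c * F * t) = c * V"
    unfolding HQ V_def W_def by (simp add: poly_pcompose algebra_simps)
  hence "q dvd poly H (c * F * t)" using q(3) by simp
  moreover have "q > B" using q(2) N_def by linarith
  ultimately show ?thesis using q(1) by blast
qed

section \<open>Radicals of prescribed degree\<close>

lemma no_nth_root_of_prime_power_in_adjoin:
  assumes t: "algebraic_over \<rat> t" and H: "cpoly H = min_poly \<rat> t" "lead_coeff H = 1"
    and p: "prime p" and root: "p dvd poly H r\<^sub>0" and simple: "\<not> p dvd poly (pderiv H) r\<^sub>0"
    and \<beta>: "\<beta> \<in> adjoin \<rat> t" and k: "0 < k" "k < n"
  shows "\<beta> ^ n \<noteq> of_int p ^ k"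
proof
  assume eq: "\<beta> ^ n = of_int p ^ k"
  obtain d P where d: "d \<noteq> 0" "of_int d * \<beta> = poly (cpoly P) t"
    using adjoin_Rats_elem_int_poly[OF \<beta>] by blast
  define T where "T = P ^ n - [:d ^ n * p ^ k:]"
  have "poly (cpoly T) t = (of_int d * \<beta>) ^ n - of_int d ^ n * of_int p ^ k"
    unfolding T_def d(2) by (simp add: map_poly_of_int_diff map_poly_of_int_power map_poly_of_int_const)
  hence "poly (cpoly T) t = 0" using eq by (simp add: power_mult_distrib)
  then obtain S where S: "T = H * S" using int_min_poly_dvd[OF t H] by (auto elim: dvdE)
  obtain r where "p ^ Suc (n * multiplicity p d + k) dvd poly H r"
    using hensel_lifting[OF p root simple, of "Suc (n * multiplicity p d + k)"] by auto
  hence "p ^ Suc (n * multiplicity p d + k) dvd poly T r" unfolding S by simp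
  thus False using not_nth_power_mod_prime_power[OF p k d(1)] unfolding T_def by simp
qed

text \<open>Writing \<open>M = \<rat>(t)\<close> with \<open>t\<close> a root of a monic integer polynomial \<open>H\<close> coprime to \<open>H'\<close>, a large
  prime divisor \<open>p\<close> of a value \<open>H(r\<^sub>0)\<close> does not divide \<open>H'(r\<^sub>0)\<close>, so \<open>H\<close> has roots modulo every
  power of \<open>p\<close>; this rules out \<open>n\<close>-th roots of \<open>p\<^sup>k\<close> in \<open>M\<close> by comparing \<open>p\<close>-adic valuations.\<close>

lemma number_field_exists_prime_without_nth_roots:
  assumes M: "number_field M"
  shows "\<exists>p. prime p \<and> (\<forall>\<beta>\<in>M. \<forall>k. 0 < k \<longrightarrow> k < n \<longrightarrow> \<beta> ^ n \<noteq> of_int p ^ k)"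
proof -
  obtain \<theta> where "\<theta> \<in> M" "M = adjoin \<rat> \<theta>"
    using number_field_primitive_element[OF M] by blast
  then obtain t H where t: "M = adjoin \<rat> t" "algebraic_over \<rat> t"
    and H: "lead_coeff H = 1" "cpoly H = min_poly \<rat> t"
    using exists_monic_int_min_poly[OF number_field_algebraic[OF M]] by metis
  have "coprime (map_poly of_int H :: rat poly) (map_poly of_int (pderiv H))"
    using coprime_int_min_poly_pderiv[OF t(2) H(2)] by (simp add: map_poly_of_int_pderiv)
  then obtain A B c where ABc: "c \<noteq> 0" "A * H + B * pderiv H = [:c:]"
    using int_poly_bezout_const by blast
  have "degree H \<ge> 1"
    using degree_int_min_poly[OF t(2) H(2)] degree_min_poly_pos[OF subfield_Rats t(2)] by simp
  then obtain p r\<^sub>0 where p: "prime p" "p > \<bar>c\<bar>" "p dvd poly H r\<^sub>0"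
    using exists_large_prime_divisor_poly_value by blast
  have "\<not> p dvd poly (pderiv H) r\<^sub>0"
  proof
    assume "p dvd poly (pderiv H) r\<^sub>0"
    hence "p dvd poly A r\<^sub>0 * poly H r\<^sub>0 + poly B r\<^sub>0 * poly (pderiv H) r\<^sub>0" using p(3) by simp
    also have "\<dots> = c" using arg_cong[OF ABc(2), of "\<lambda>q. poly q r\<^sub>0"] by simp
    finally have "\<bar>p\<bar> \<le> \<bar>c\<bar>" using dvd_imp_le_int[OF ABc(1)] by blast
    thus False using p(2) by linarith
  qed
  thus ?thesis
    using no_nth_root_of_prime_power_in_adjoin[OF t(2) H(2,1) p(1,3)] p(1) t(1) by blast
qed

lemma prod_mset_uminus: "(\<Prod>z\<in>#A. - z) = (-1) ^ size A * prod_mset A"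
  for A :: "'a::comm_ring_1 multiset"
  by (induct A) (auto simp: algebra_simps)

lemma prod_proots_min_poly_mem:
  assumes F: "subfield F CC" and alg: "algebraic_over F x"
  shows "prod_mset (proots (min_poly F x)) \<in> F"
proof -
  let ?m = "min_poly F x" and ?R = "proots (min_poly F x)"
  have "?m = (\<Prod>z\<in>#?R. [:- z, 1:])"
    using complex_poly_decompose_multiset[of ?m] min_poly_monic[OF F alg] by simp
  hence "coeff ?m 0 = (\<Prod>z\<in>#?R. - z)"
    by (metis (no_types, lifting) poly_0_coeff_0 poly_prod_mset poly_pCons mult_zero_left add_0_right
        image_mset_cong poly_0)
  hence "prod_mset ?R = (-1) ^ size ?R * coeff ?m 0"
    by (simp add: prod_mset_uminus flip: power_mult_distrib)
  moreover have "(-1) ^ size ?R \<in> F" "coeff ?m 0 \<in> F"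
    using subfield_CC_closed[OF F] min_poly_over[OF F alg] by (auto simp: poly_over_def)
  ultimately show ?thesis using subfield_CC_mult[OF F] by simp
qed

lemma degree_min_poly_radical:
  assumes F: "subfield F CC" and n: "n \<ge> 1" and a: "a \<in> F" and \<alpha>: "\<alpha> ^ n = a"
    and no_roots: "\<And>\<beta> k. \<beta> \<in> F \<Longrightarrow> 0 < k \<Longrightarrow> k < n \<Longrightarrow> \<beta> ^ n \<noteq> a ^ k"
  shows "degree (min_poly F \<alpha>) = n"
proof -
  have radical: "\<alpha> ^ n \<in> F" using a \<alpha> by simp
  have alg: "algebraic_over F \<alpha>" by (rule algebraic_over_radical[OF F n radical])
  let ?m = "min_poly F \<alpha>" and ?R = "proots (min_poly F \<alpha>)"
  have "z ^ n = a" if "z \<in># ?R" for z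
  proof -
    have "?m dvd monom 1 n - [:a:]"
      using min_poly_dvd[OF F alg poly_over_radical[OF F a]] \<alpha> by (simp add: poly_monom)
    then obtain q where q: "monom 1 n - [:a:] = ?m * q" by (rule dvdE)
    have "poly ?m z = 0" using that min_poly_nonzero[OF F alg] by simp
    hence "poly (?m * q) z = 0" by simp
    thus ?thesis unfolding q[symmetric] by (simp add: poly_monom)
  qed
  moreover have "prod_mset A ^ n = a ^ size A" if "\<And>z. z \<in># A \<Longrightarrow> z ^ n = a" for A
    using that by (induct A) (auto simp: power_mult_distrib)
  ultimately have norm_power: "prod_mset ?R ^ n = a ^ degree ?m"
    by (simp add: size_proots_complex)
  show ?thesis
  proof (rule ccontr)
    assume "degree ?m \<noteq> n"
    hence "0 < degree ?m" "degree ?m < n"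
      using degree_min_poly_pos[OF F alg] degree_min_poly_radical_le[OF F n radical] by auto
    thus False using no_roots[OF prod_proots_min_poly_mem[OF F alg]] norm_power by blast
  qed
qed

lemma exists_radical_of_degree:
  assumes M: "number_field M" and n: "n \<ge> 1"
  shows "\<exists>\<alpha>. \<alpha> ^ n \<in> \<rat> \<and> degree (min_poly M \<alpha>) = n"
proof -
  obtain p where p: "prime p" and no_roots: "\<And>\<beta> k. \<beta> \<in> M \<Longrightarrow> 0 < k \<Longrightarrow> k < n \<Longrightarrow> \<beta> ^ n \<noteq> of_int p ^ k"
    using number_field_exists_prime_without_nth_roots[OF M] by blast
  define \<alpha> where "\<alpha> = complex_of_real (root n (of_int p))"
  have "\<alpha> ^ n = of_int p"
    unfolding \<alpha>_def using n prime_ge_0_int[OF p] by (simp flip: of_real_power)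
  moreover have "degree (min_poly M \<alpha>) = n"
    using degree_min_poly_radical[OF subfield_number_field[OF M] n _ \<open>\<alpha> ^ n = of_int p\<close> no_roots]
      subfield_CC_of_int[OF subfield_number_field[OF M]] by blast
  ultimately show ?thesis by (metis Rats_of_int)
qed

section \<open>Compositum feasible triples\<close>

lemma lcm_set_iff:
  "(a, b, c) \<in> lcm_set \<longleftrightarrow> (\<exists>s u v. 0 < s \<and> 0 < u \<and> 0 < v \<and> a = s * u \<and> b = s * v \<and> c = s * u * v)"
proof
  assume "(a, b, c) \<in> lcm_set"
  then obtain t where ab: "0 < a" "0 < b" and t: "0 < t" "t dvd gcd a b" and c: "c = lcm a b * t"
    unfolding lcm_set_def by auto
  define g where "g = gcd a b"
  obtain s where s: "g = t * s" using t(2) unfolding g_def by (rule dvdE)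
  obtain a' where a': "a = g * a'" unfolding g_def by (metis dvd_def gcd_dvd1)
  obtain b' where b': "b = g * b'" unfolding g_def by (metis dvd_def gcd_dvd2)
  have g: "g > 0" using ab unfolding g_def by simp
  have "g * lcm a b = a * b" unfolding g_def by (rule prod_gcd_lcm_nat[symmetric])
  also have "\<dots> = g * (g * a' * b')" using a' b' by simp
  finally have lcm_eq: "lcm a b = g * a' * b'" using g by simp
  have "a = s * (a' * t)" "b = s * (b' * t)" using a' b' s by simp_all
  moreover have "c = s * (a' * t) * (b' * t)" unfolding c lcm_eq s by simp
  moreover have "0 < s" "0 < a' * t" "0 < b' * t" using g s ab a' b' t(1) by simp_all
  ultimately show "\<exists>s u v. 0 < s \<and> 0 < u \<and> 0 < v \<and> a = s * u \<and> b = s * v \<and> c = s * u * v"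
    by blast
next
  assume "\<exists>s u v. 0 < s \<and> 0 < u \<and> 0 < v \<and> a = s * u \<and> b = s * v \<and> c = s * u * v"
  then obtain s u v where pos: "0 < s" "0 < u" "0 < v" and abc: "a = s * u" "b = s * v" "c = s * u * v"
    by blast
  have "lcm a b * gcd u v = s * (gcd u v * lcm u v)"
    using abc by (simp add: lcm_mult_left)
  also have "gcd u v * lcm u v = u * v" by (rule prod_gcd_lcm_nat[symmetric])
  finally have "c = lcm a b * gcd u v" using abc by simp
  moreover have "gcd u v dvd gcd a b" using abc by (simp add: gcd_mult_left)
  moreover have "0 < gcd u v" using pos by simp
  ultimately show "(a, b, c) \<in> lcm_set"
    unfolding lcm_set_def using pos abc by auto
qed

lemma lcm_set_mult:
  assumes x: "x \<in> lcm_set" and y: "y \<in> lcm_set"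
  shows "tmult x y \<in> lcm_set"
proof -
  obtain a b c a' b' c' where xy: "x = (a, b, c)" "y = (a', b', c')" by (metis prod_cases3)
  obtain s u v where "0 < s" "0 < u" "0 < v" "a = s * u" "b = s * v" "c = s * u * v"
    using x unfolding xy lcm_set_iff by blast
  moreover obtain s' u' v' where "0 < s'" "0 < u'" "0 < v'" "a' = s' * u'" "b' = s' * v'" "c' = s' * u' * v'"
    using y unfolding xy lcm_set_iff by blast
  ultimately have "(a * a', b * b', c * c') \<in> lcm_set"
    unfolding lcm_set_iff
    by (intro exI[of _ "s * s'"] exI[of _ "u * u'"] exI[of _ "v * v'"]) (simp add: ac_simps)
  thus ?thesis unfolding xy tmult_def by simp
qed

context
  fixes L L' x
  assumes L: "subfield L CC" and L': "subfield L' CC"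
    and M_x: "subfield (adjoin (compositum L L') x) CC"
begin

lemma adjoin_subset_adjoin_compositum:
  "adjoin L x \<subseteq> adjoin (compositum L L') x" "adjoin L' x \<subseteq> adjoin (compositum L L') x"
proof -
  let ?M = "compositum L L'"
  have "?M \<subseteq> adjoin ?M x" "x \<in> adjoin ?M x"
    using subset_adjoin mem_adjoin[OF subfieldE(1)[OF subfield_compositum]] by auto
  thus "adjoin L x \<subseteq> adjoin ?M x" "adjoin L' x \<subseteq> adjoin ?M x"
    using compositum_upper[where L = L and L' = L']
    unfolding adjoin_subset_iff[OF subfieldE(1)[OF L] subfieldE(1)[OF M_x]]
      adjoin_subset_iff[OF subfieldE(1)[OF L'] subfieldE(1)[OF M_x]]
    by auto
qed

lemma compositum_adjoin_left: "compositum (adjoin L x) L' = adjoin (compositum L L') x"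
proof
  let ?M = "compositum L L'" and ?C = "compositum (adjoin L x) L'"
  have "L' \<subseteq> adjoin ?M x"
    using compositum_upper(2)[where L = L and L' = L'] subset_adjoin[of ?M x] by blast
  thus "?C \<subseteq> adjoin ?M x"
    unfolding compositum_subset_iff[OF M_x] using adjoin_subset_adjoin_compositum(1) by blast
  have "L \<subseteq> ?C" "L' \<subseteq> ?C" "x \<in> ?C"
    using compositum_upper[where L = "adjoin L x" and L' = L'] subset_adjoin[of L x]
      mem_adjoin[OF subfieldE(1)[OF L]] by auto
  thus "adjoin ?M x \<subseteq> ?C"
    unfolding adjoin_subset_iff[OF subfieldE(1)[OF subfield_compositum] subfieldE(1)[OF subfield_compositum]]
      compositum_subset_iff[OF subfield_compositum] by blast
qed

lemma compositum_adjoin_both: "compositum (adjoin L x) (adjoin L' x) = adjoin (compositum L L') x"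
proof
  let ?M = "compositum L L'" and ?C = "compositum (adjoin L x) (adjoin L' x)"
  show "?C \<subseteq> adjoin ?M x"
    unfolding compositum_subset_iff[OF M_x] using adjoin_subset_adjoin_compositum by blast
  have "L \<subseteq> ?C" "L' \<subseteq> ?C" "x \<in> ?C"
    using compositum_upper[where L = "adjoin L x" and L' = "adjoin L' x"] subset_adjoin[of L x]
      subset_adjoin[of L' x] mem_adjoin[OF subfieldE(1)[OF L]] by auto
  thus "adjoin ?M x \<subseteq> ?C"
    unfolding adjoin_subset_iff[OF subfieldE(1)[OF subfield_compositum] subfieldE(1)[OF subfield_compositum]]
      compositum_subset_iff[OF subfield_compositum] by blast
qed

end

text \<open>The degree of a radical does not drop when passing to a subfield containing its power.\<close>

lemma ext_of_degree_adjoin_radical: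
  assumes E: "ext_of_degree K E a" and M: "subfield M CC" and EM: "E \<subseteq> M"
    and n: "n \<ge> 1" and x: "x ^ n \<in> \<rat>" and deg: "degree (min_poly M x) = n" and K: "subfield K CC"
  shows "ext_of_degree K (adjoin E x) (a * n)"
proof -
  have E': "subfield E CC" "K \<subseteq> E" "C.dimension a K E" using E unfolding ext_of_degree_def by auto
  have x': "x ^ n \<in> E" using x Rats_subset_subfield_CC[OF E'(1)] by blast
  have alg: "algebraic_over E x" by (rule algebraic_over_radical[OF E'(1) n x'])
  have "degree (min_poly E x) = n"
    using degree_min_poly_radical_le[OF E'(1) n x'] degree_min_poly_antimono[OF E'(1) M EM alg] deg
    by simp
  hence "C.dimension (a * n) K (adjoin E x)"
    using C.telescopic_base[OF K E'(1,3) dimension_adjoin[OF E'(1) alg]] by simp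
  thus ?thesis
    using subfield_adjoin[OF E'(1) alg] E'(2) subset_adjoin[of E x] unfolding ext_of_degree_def by blast
qed

definition realizes :: "complex set \<Rightarrow> complex set \<Rightarrow> complex set \<Rightarrow> nat \<Rightarrow> nat \<Rightarrow> nat \<Rightarrow> bool" where
  "realizes K L L' a b c \<longleftrightarrow>
     ext_of_degree K L a \<and> ext_of_degree K L' b \<and> ext_of_degree K (compositum L L') c"

lemma realizes_swap: "realizes K L L' a b c \<Longrightarrow> realizes K L' L b a c"
  unfolding realizes_def by (simp add: compositum_commute)

lemma number_field_compositum_realizes:
  "number_field K \<Longrightarrow> realizes K L L' a b c \<Longrightarrow> number_field (compositum L L')"
  unfolding realizes_def ext_of_degree_def using number_field_finite_extension by blast

context
  fixes K L L' :: "complex set" and x :: complex and a b c n :: nat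
  assumes K: "subfield K CC" and LL': "realizes K L L' a b c"
    and n: "n \<ge> 1" and x: "x ^ n \<in> \<rat>" and deg: "degree (min_poly (compositum L L') x) = n"
begin

lemma ext_of_degree_adjoin_compositum: "ext_of_degree K (adjoin (compositum L L') x) (c * n)"
  using ext_of_degree_adjoin_radical[OF _ subfield_compositum subset_refl n x deg K] LL'
  unfolding realizes_def by blast

lemma realizes_adjoin_left: "realizes K (adjoin L x) L' (a * n) b (c * n)"
proof -
  have L: "subfield L CC" and L': "subfield L' CC"
    using LL' unfolding realizes_def ext_of_degree_def by auto
  have "compositum (adjoin L x) L' = adjoin (compositum L L') x"
    using compositum_adjoin_left[OF L L'] ext_of_degree_adjoin_compositum
    unfolding ext_of_degree_def by blast
  thus ?thesis
    using LL' ext_of_degree_adjoin_radical[OF _ subfield_compositum compositum_upper(1) n x deg K]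
      ext_of_degree_adjoin_compositum unfolding realizes_def by auto
qed

lemma realizes_adjoin_both: "realizes K (adjoin L x) (adjoin L' x) (a * n) (b * n) (c * n)"
proof -
  have L: "subfield L CC" and L': "subfield L' CC"
    using LL' unfolding realizes_def ext_of_degree_def by auto
  have "compositum (adjoin L x) (adjoin L' x) = adjoin (compositum L L') x"
    using compositum_adjoin_both[OF L L'] ext_of_degree_adjoin_compositum
    unfolding ext_of_degree_def by blast
  thus ?thesis
    using LL' ext_of_degree_adjoin_radical[OF _ subfield_compositum compositum_upper(1) n x deg K]
      ext_of_degree_adjoin_radical[OF _ subfield_compositum compositum_upper(2) n x deg K]
      ext_of_degree_adjoin_compositum unfolding realizes_def by auto
qed

end

lemma realizes_adjoin_radical:
  assumes K: "number_field K" and LL': "realizes K L L' a b c" and n: "n \<ge> 1"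
  shows "\<exists>L\<^sub>1. realizes K L\<^sub>1 L' (a * n) b (c * n)"
    and "\<exists>L\<^sub>1'. realizes K L L\<^sub>1' a (b * n) (c * n)"
    and "\<exists>L\<^sub>1 L\<^sub>1'. realizes K L\<^sub>1 L\<^sub>1' (a * n) (b * n) (c * n)"
proof -
  have Ksub: "subfield K CC" using K by (rule subfield_number_field)
  obtain x where x: "x ^ n \<in> \<rat>" "degree (min_poly (compositum L L') x) = n"
    using exists_radical_of_degree[OF number_field_compositum_realizes[OF K LL'] n] by blast
  show "\<exists>L\<^sub>1. realizes K L\<^sub>1 L' (a * n) b (c * n)"
    using realizes_adjoin_left[OF Ksub LL' n x] by blast
  show "\<exists>L\<^sub>1 L\<^sub>1'. realizes K L\<^sub>1 L\<^sub>1' (a * n) (b * n) (c * n)"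
    using realizes_adjoin_both[OF Ksub LL' n x] by blast
  have "degree (min_poly (compositum L' L) x) = n" using x(2) by (simp add: compositum_commute)
  thus "\<exists>L\<^sub>1'. realizes K L L\<^sub>1' a (b * n) (c * n)"
    using realizes_swap realizes_adjoin_left[OF Ksub realizes_swap[OF LL'] n x(1)] by blast
qed

lemma feasible_set_mult_lcm_set:
  assumes K: "number_field K" and feasible: "(a', b', c') \<in> feasible_set K" and lcm: "(a, b, c) \<in> lcm_set"
  shows "(a * a', b * b', c * c') \<in> feasible_set K"
proof -
  obtain s u v where pos: "0 < s" "0 < u" "0 < v" and abc: "a = s * u" "b = s * v" "c = s * u * v"
    using lcm unfolding lcm_set_iff by blast
  obtain L L' where pos': "0 < a'" "0 < b'" "0 < c'" and LL': "realizes K L L' a' b' c'"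
    using feasible unfolding feasible_set_def compositum_feasible_def realizes_def by blast
  then obtain L\<^sub>1 L\<^sub>1' where "realizes K L\<^sub>1 L\<^sub>1' (a' * s) (b' * s) (c' * s)"
    using realizes_adjoin_radical(3)[OF K LL'] pos by fastforce
  then obtain L\<^sub>2 where "realizes K L\<^sub>2 L\<^sub>1' (a' * s * u) (b' * s) (c' * s * u)"
    using realizes_adjoin_radical(1)[OF K] pos by fastforce
  then obtain L\<^sub>2' where "realizes K L\<^sub>2 L\<^sub>2' (a' * s * u) (b' * s * v) (c' * s * u * v)"
    using realizes_adjoin_radical(2)[OF K] pos by fastforce
  moreover have "0 < a * a'" "0 < b * b'" "0 < c * c'" using pos pos' abc by auto
  ultimately show ?thesis
    unfolding feasible_set_def compositum_feasible_def realizes_def abc by (auto simp: ac_simps)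
qed

lemma one_in_feasible_set: "number_field K \<Longrightarrow> (1, 1, 1) \<in> feasible_set K"
  using C.dimension_one[OF subfield_number_field] compositum_self[OF subfield_number_field]
    subfield_number_field
  unfolding feasible_set_def compositum_feasible_def ext_of_degree_def by fastforce

theorem mainTheorem11:
  fixes K :: "complex set"
  assumes "number_field K"
  shows "(\<forall>a b c a' b' c'. (a, b, c) \<in> feasible_set K \<and> (a', b', c') \<in> feasible_set K
            \<and> (a, b, c) \<in> lcm_set \<longrightarrow> (a * a', b * b', c * c') \<in> feasible_set K)
       \<and> lcm_set \<subseteq> feasible_set K
       \<and> (1, 1, 1) \<in> lcm_set
       \<and> (\<forall>x \<in> lcm_set. \<forall>y \<in> lcm_set. tmult x y \<in> lcm_set)
       \<and> (\<forall>x y. tmult x y = tmult y x)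
       \<and> (\<forall>x y z. tmult (tmult x y) z = tmult x (tmult y z))
       \<and> (\<forall>x. tmult (1, 1, 1) x = x)
       \<and> (\<forall>a b c (n::nat). (a, b, c) \<in> lcm_set \<longrightarrow> (a ^ n, b ^ n, c ^ n) \<in> lcm_set)"
proof (intro conjI)
  show "\<forall>a b c a' b' c'. (a, b, c) \<in> feasible_set K \<and> (a', b', c') \<in> feasible_set K
            \<and> (a, b, c) \<in> lcm_set \<longrightarrow> (a * a', b * b', c * c') \<in> feasible_set K"
    using feasible_set_mult_lcm_set[OF assms] by blast
  show one: "(1, 1, 1) \<in> lcm_set" unfolding lcm_set_def by auto
  show "lcm_set \<subseteq> feasible_set K"
    using feasible_set_mult_lcm_set[OF assms one_in_feasible_set[OF assms]] by auto
  show "\<forall>x \<in> lcm_set. \<forall>y \<in> lcm_set. tmult x y \<in> lcm_set" using lcm_set_mult by blast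
  show "\<forall>a b c (n::nat). (a, b, c) \<in> lcm_set \<longrightarrow> (a ^ n, b ^ n, c ^ n) \<in> lcm_set"
  proof (intro allI impI)
    fix a b c n assume "(a, b, c) \<in> lcm_set"
    thus "(a ^ n, b ^ n, c ^ n) \<in> lcm_set"
      using one lcm_set_mult[of "(a, b, c)"] by (induct n) (auto simp: tmult_def)
  qed
qed (auto simp: tmult_def ac_simps split: prod.splits)

end
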